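(* Let $\mathcal{B}=(X,P,B)$ be an ordinal ballean. Then $\mathcal{B}$ is either metrizable or cellular.
   Context: A ball structure is a triple $\mathcal{B}=(X,P,B)$ where $X,P$ are non-empty sets and for all $x\in X$, $\alpha\in P$, $B(x,\alpha)\subseteq X$ with $x\in B(x,\alpha)$ (the ball of radius $\alpha$ around $x$). Put $B^*(x,\alpha)=\{y\in X: x\in B(y,\alpha)\}$ and $B(A,\alpha)=\bigcup_{a\in A}B(a,\alpha)$ for $A\subseteq X$. A ball structure is a ballean if (1) for all $\alpha,\beta\in P$ there are $\alpha',\beta'\in P$ with $B(x,\alpha)\subseteq B^*(x,\alpha')$ and $B^*(x,\beta)\subseteq B(x,\beta')$ for all $x\in X$; and (2) for all $\alpha,\beta\in P$ there is $\gamma\in P$ with $B(B(x,\alpha),\beta)\subseteq B(x,\gamma)$ for all $x\in X$. For balleans $\mathcal{B}_1=(X_1,P_1,B_1)$, $\mathcal{B}_2=(X_2,P_2,B_2)$, a map $f:X_1\to X_2$ is a $\prec$-mapping if for every $\alpha\in P_1$ there is $\beta\in P_2$ with $f(B_1(x,\alpha))\subseteq B_2(f(x),\beta)$ for all $x\in X_1$; a bijection $f$ is an asymorphism if $f$ and $f^{-1}$ are $\prec$-mappings, and then the balleans are asymorphic. Two balleans on the same set are identified ($\mathcal{B}_1=\mathcal{B}_2$) if the identity map is an asymorphism. A metric space $(X,d)$ gives the metric ballean $(X,\mathbb{R}^+,B_d)$ with $B_d(x,r)=\{y: d(x,y)\le r\}$; a ballean is metrizable if it is asymorphic to some metric ballean.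 A ballean is connected if for all $x,y\in X$ there is $\alpha\in P$ with $y\in B(x,\alpha)$. Preorder $P$ by $\alpha\le\beta$ iff $B(x,\alpha)\subseteq B(x,\beta)$ for all $x\in X$. A connected ballean is ordinal if $P$ has a cofinal subset (i.e. a subset $P'$ such that every $\alpha\in P$ is $\le$ some element of $P'$) which is well-ordered by $\le$. For $\alpha\in P$, points $x,y$ are $\alpha$-path connected if there are $x=x_0,x_1,\dots,x_n=y$ with $x_{i+1}\in B(x_i,\alpha)$ for all $i$; let $B^{\Box}(x,\alpha)=\{y: x,y \text{ are } \alpha\text{-path connected}\}$. The cellularization is $\mathcal{B}^{\Box}=(X,P,B^{\Box})$, and $\mathcal{B}$ is cellular if $\mathcal{B}^{\Box}=\mathcal{B}$ (i.e. the identity map is an asymorphism between them). *)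

theory Defs
  imports Complex_Main
begin

definition ball_structure :: "'a set \<Rightarrow> 'p set \<Rightarrow> ('a \<Rightarrow> 'p \<Rightarrow> 'a set) \<Rightarrow> bool" where
  "ball_structure X P B \<longleftrightarrow> X \<noteq> {} \<and> P \<noteq> {} \<and>
     (\<forall>x\<in>X. \<forall>\<alpha>\<in>P. B x \<alpha> \<subseteq> X \<and> x \<in> B x \<alpha>)"

definition dual_ball :: "'a set \<Rightarrow> ('a \<Rightarrow> 'p \<Rightarrow> 'a set) \<Rightarrow> 'a \<Rightarrow> 'p \<Rightarrow> 'a set" where
  "dual_ball X B x \<alpha> = {y \<in> X. x \<in> B y \<alpha>}"

definition ball_of_set :: "('a \<Rightarrow> 'p \<Rightarrow> 'a set) \<Rightarrow> 'a set \<Rightarrow> 'p \<Rightarrow> 'a set" where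
  "ball_of_set B A \<alpha> = (\<Union>a\<in>A. B a \<alpha>)"

definition ballean :: "'a set \<Rightarrow> 'p set \<Rightarrow> ('a \<Rightarrow> 'p \<Rightarrow> 'a set) \<Rightarrow> bool" where
  "ballean X P B \<longleftrightarrow> ball_structure X P B \<and>
     (\<forall>\<alpha>\<in>P. \<forall>\<beta>\<in>P. \<exists>\<alpha>'\<in>P. \<exists>\<beta>'\<in>P. \<forall>x\<in>X.
        B x \<alpha> \<subseteq> dual_ball X B x \<alpha>' \<and> dual_ball X B x \<beta> \<subseteq> B x \<beta>') \<and>
     (\<forall>\<alpha>\<in>P. \<forall>\<beta>\<in>P. \<exists>\<gamma>\<in>P. \<forall>x\<in>X. ball_of_set B (B x \<alpha>) \<beta> \<subseteq> B x \<gamma>)"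

definition prec_mapping ::
  "'a set \<Rightarrow> 'p set \<Rightarrow> ('a \<Rightarrow> 'p \<Rightarrow> 'a set) \<Rightarrow>
   'b set \<Rightarrow> 'q set \<Rightarrow> ('b \<Rightarrow> 'q \<Rightarrow> 'b set) \<Rightarrow> ('a \<Rightarrow> 'b) \<Rightarrow> bool" where
  "prec_mapping X1 P1 B1 X2 P2 B2 f \<longleftrightarrow>
     (\<forall>\<alpha>\<in>P1. \<exists>\<beta>\<in>P2. \<forall>x\<in>X1. f ` B1 x \<alpha> \<subseteq> B2 (f x) \<beta>)"

definition asymorphism ::
  "'a set \<Rightarrow> 'p set \<Rightarrow> ('a \<Rightarrow> 'p \<Rightarrow> 'a set) \<Rightarrow>
   'b set \<Rightarrow> 'q set \<Rightarrow> ('b \<Rightarrow> 'q \<Rightarrow> 'b set) \<Rightarrow> ('a \<Rightarrow> 'b) \<Rightarrow> bool" where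
  "asymorphism X1 P1 B1 X2 P2 B2 f \<longleftrightarrow> bij_betw f X1 X2 \<and>
     prec_mapping X1 P1 B1 X2 P2 B2 f \<and>
     prec_mapping X2 P2 B2 X1 P1 B1 (inv_into X1 f)"

definition metric_on :: "'a set \<Rightarrow> ('a \<Rightarrow> 'a \<Rightarrow> real) \<Rightarrow> bool" where
  "metric_on X d \<longleftrightarrow> (\<forall>x\<in>X. \<forall>y\<in>X. 0 \<le> d x y \<and> (d x y = 0 \<longleftrightarrow> x = y) \<and> d x y = d y x) \<and>
     (\<forall>x\<in>X. \<forall>y\<in>X. \<forall>z\<in>X. d x z \<le> d x y + d y z)"

definition metric_ball :: "'a set \<Rightarrow> ('a \<Rightarrow> 'a \<Rightarrow> real) \<Rightarrow> 'a \<Rightarrow> real \<Rightarrow> 'a set" where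
  "metric_ball X d x r = {y \<in> X. d x y \<le> r}"

abbreviation nonneg_reals :: "real set" where
  "nonneg_reals \<equiv> {r. 0 \<le> r}"

(* Asymorphic to some metric ballean; the metric space is taken on a type 'b chosen
   by the caller (in the theorem we take it on the carrier type itself, which loses
   no generality since any metric space can be transported along a bijection). *)
definition metrizable_on :: "'b itself \<Rightarrow> 'a set \<Rightarrow> 'p set \<Rightarrow> ('a \<Rightarrow> 'p \<Rightarrow> 'a set) \<Rightarrow> bool" where
  "metrizable_on _ X P B \<longleftrightarrow> (\<exists>(Y::'b set) d f. metric_on Y d \<and>
      asymorphism X P B Y nonneg_reals (metric_ball Y d) f)"

abbreviation metrizable :: "'a set \<Rightarrow> 'p set \<Rightarrow> ('a \<Rightarrow> 'p \<Rightarrow> 'a set) \<Rightarrow> bool" where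
  "metrizable X P B \<equiv> metrizable_on TYPE('a) X P B"

definition connected_ballean :: "'a set \<Rightarrow> 'p set \<Rightarrow> ('a \<Rightarrow> 'p \<Rightarrow> 'a set) \<Rightarrow> bool" where
  "connected_ballean X P B \<longleftrightarrow> (\<forall>x\<in>X. \<forall>y\<in>X. \<exists>\<alpha>\<in>P. y \<in> B x \<alpha>)"

definition radius_le :: "'a set \<Rightarrow> ('a \<Rightarrow> 'p \<Rightarrow> 'a set) \<Rightarrow> 'p \<Rightarrow> 'p \<Rightarrow> bool" where
  "radius_le X B \<alpha> \<beta> \<longleftrightarrow> (\<forall>x\<in>X. B x \<alpha> \<subseteq> B x \<beta>)"

definition ordinal_ballean :: "'a set \<Rightarrow> 'p set \<Rightarrow> ('a \<Rightarrow> 'p \<Rightarrow> 'a set) \<Rightarrow> bool" where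
  "ordinal_ballean X P B \<longleftrightarrow> connected_ballean X P B \<and>
     (\<exists>P' \<subseteq> P. (\<forall>\<alpha>\<in>P. \<exists>\<beta>\<in>P'. radius_le X B \<alpha> \<beta>) \<and>
        well_order_on P' {(\<alpha>, \<beta>). \<alpha> \<in> P' \<and> \<beta> \<in> P' \<and> radius_le X B \<alpha> \<beta>})"

definition cell_ball :: "'a set \<Rightarrow> ('a \<Rightarrow> 'p \<Rightarrow> 'a set) \<Rightarrow> 'a \<Rightarrow> 'p \<Rightarrow> 'a set" where
  "cell_ball X B x \<alpha> = {y. (\<lambda>u v. u \<in> X \<and> v \<in> B u \<alpha>)\<^sup>*\<^sup>* x y}"

definition cellular :: "'a set \<Rightarrow> 'p set \<Rightarrow> ('a \<Rightarrow> 'p \<Rightarrow> 'a set) \<Rightarrow> bool" where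
  "cellular X P B \<longleftrightarrow> asymorphism X P (cell_ball X B) X P B id"

end

theory Submission
  imports Defs
begin

text \<open>If the radii admit a cofinal sequence, it can be refined to a sequence \<open>\<delta>\<^sub>n\<close> in which
the symmetrised \<open>\<delta>\<^sub>n\<close>-balls compose into \<open>\<delta>\<^sub>n\<^sub>+\<^sub>1\<close>-balls; then
\<open>d(x,y) = 1 + min {n. y lies in the symmetrised \<open>\<delta>\<^sub>n\<close>-ball of x}\<close> (and \<open>d(x,x) = 0\<close>) is a metric
whose balls are mutually bounded with those of the ballean. Otherwise, for a radius \<open>\<alpha>\<close> the
\<open>\<alpha>\<close>-path component of \<open>x\<close> lies in the union of an increasing sequence of balls \<open>B(x,\<beta>\<^sub>n)\<close>,
\<open>\<beta>\<^sub>n\<close> taken in the well-ordered cofinal set. That sequence is not cofinal, so some element of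
the linearly ordered cofinal set dominates every \<open>\<beta>\<^sub>n\<close>: the cellular balls are bounded by ordinary
balls, i.e. the ballean is cellular.\<close>

lemma radius_le_refl [simp]: "radius_le X B a a"
  by (simp add: radius_le_def)

lemma radius_le_trans: "radius_le X B a b \<Longrightarrow> radius_le X B b c \<Longrightarrow> radius_le X B a c"
  by (auto simp: radius_le_def)

lemma ballean_ball_subset: "ballean X P B \<Longrightarrow> x \<in> X \<Longrightarrow> a \<in> P \<Longrightarrow> B x a \<subseteq> X"
  by (simp add: ballean_def ball_structure_def)

lemma ballean_center_in_ball: "ballean X P B \<Longrightarrow> x \<in> X \<Longrightarrow> a \<in> P \<Longrightarrow> x \<in> B x a"
  by (simp add: ballean_def ball_structure_def)

lemma ballean_dual_ball_bounded:
  "ballean X P B \<Longrightarrow> a \<in> P \<Longrightarrow> \<exists>b\<in>P. \<forall>x\<in>X. dual_ball X B x a \<subseteq> B x b"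
  unfolding ballean_def by blast

lemma ballean_compose:
  "ballean X P B \<Longrightarrow> a \<in> P \<Longrightarrow> b \<in> P \<Longrightarrow> \<exists>g\<in>P. \<forall>x\<in>X. ball_of_set B (B x a) b \<subseteq> B x g"
  unfolding ballean_def by blast

lemma radius_le_of_compose:
  assumes ballean: "ballean X P B" and "a \<in> P" "b \<in> P"
    and compose: "\<forall>x\<in>X. ball_of_set B (B x a) b \<subseteq> B x g"
  shows "radius_le X B a g" "radius_le X B b g"
proof -
  have "y \<in> B x g" if "x \<in> X" "y \<in> B x a" for x y
  proof -
    have "y \<in> B y b"
      using ballean_ball_subset[OF ballean that(1) \<open>a \<in> P\<close>] that(2)
        ballean_center_in_ball[OF ballean _ \<open>b \<in> P\<close>] by blast
    with that compose show ?thesis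
      unfolding ball_of_set_def by blast
  qed
  then show "radius_le X B a g"
    unfolding radius_le_def by blast
  have "y \<in> B x g" if "x \<in> X" "y \<in> B x b" for x y
    using ballean_center_in_ball[OF ballean that(1) \<open>a \<in> P\<close>] that compose
    unfolding ball_of_set_def by blast
  then show "radius_le X B b g"
    unfolding radius_le_def by blast
qed

lemma ballean_upper_bound:
  assumes "ballean X P B" "a \<in> P" "b \<in> P"
  shows "\<exists>g\<in>P. radius_le X B a g \<and> radius_le X B b g"
proof -
  obtain g where "g \<in> P" "\<forall>x\<in>X. ball_of_set B (B x a) b \<subseteq> B x g"
    using ballean_compose[OF assms] by blast
  with radius_le_of_compose[OF assms] show ?thesis by blast
qed

definition sym_ball :: "'a set \<Rightarrow> ('a \<Rightarrow> 'p \<Rightarrow> 'a set) \<Rightarrow> 'a \<Rightarrow> 'p \<Rightarrow> 'a set" where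
  "sym_ball X B x a = B x a \<union> dual_ball X B x a"

lemma sym_ball_commute:
  "x \<in> X \<Longrightarrow> y \<in> X \<Longrightarrow> y \<in> sym_ball X B x a \<longleftrightarrow> x \<in> sym_ball X B y a"
  unfolding sym_ball_def dual_ball_def by blast

lemma sym_ball_mono:
  "radius_le X B a b \<Longrightarrow> x \<in> X \<Longrightarrow> sym_ball X B x a \<subseteq> sym_ball X B x b"
  unfolding sym_ball_def dual_ball_def radius_le_def by blast

lemma ballean_sym_ball_bounded:
  assumes "ballean X P B" "a \<in> P"
  shows "\<exists>b\<in>P. \<forall>x\<in>X. sym_ball X B x a \<subseteq> B x b"
proof -
  obtain b where "b \<in> P" and b: "\<forall>x\<in>X. dual_ball X B x a \<subseteq> B x b"
    using ballean_dual_ball_bounded[OF assms] by blast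
  then obtain g where "g \<in> P" "radius_le X B a g" "radius_le X B b g"
    using ballean_upper_bound[OF assms \<open>b \<in> P\<close>] by blast
  with b show ?thesis
    unfolding sym_ball_def radius_le_def by blast
qed

lemma ballean_sym_ball_compose:
  assumes "ballean X P B" "a \<in> P"
  shows "\<exists>g\<in>P. \<forall>x\<in>X. ball_of_set (sym_ball X B) (sym_ball X B x a) a \<subseteq> B x g"
proof -
  obtain b where "b \<in> P" and b: "\<forall>x\<in>X. sym_ball X B x a \<subseteq> B x b"
    using ballean_sym_ball_bounded[OF assms] by blast
  then obtain g where "g \<in> P" and g: "\<forall>x\<in>X. ball_of_set B (B x b) b \<subseteq> B x g"
    using ballean_compose[OF assms(1)] by blast
  have "ball_of_set (sym_ball X B) (sym_ball X B x a) a \<subseteq> B x g" if "x \<in> X" for x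
  proof
    fix z assume "z \<in> ball_of_set (sym_ball X B) (sym_ball X B x a) a"
    then obtain y where y: "y \<in> sym_ball X B x a" and z: "z \<in> sym_ball X B y a"
      unfolding ball_of_set_def by blast
    have "y \<in> X"
      using y ballean_ball_subset[OF assms(1) that assms(2)] unfolding sym_ball_def dual_ball_def by blast
    with b y z that have "z \<in> ball_of_set B (B x b) b"
      unfolding ball_of_set_def by blast
    with g that show "z \<in> B x g" by blast
  qed
  with \<open>g \<in> P\<close> show ?thesis by blast
qed

lemma asymorphism_idI:
  assumes "\<forall>x\<in>X. \<forall>b\<in>Q. C x b \<subseteq> X"
    and "\<forall>a\<in>P. \<exists>b\<in>Q. \<forall>x\<in>X. B x a \<subseteq> C x b"
    and "\<forall>b\<in>Q. \<exists>a\<in>P. \<forall>x\<in>X. C x b \<subseteq> B x a"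
  shows "asymorphism X P B X Q C id"
proof -
  have inv_id: "inv_into X id x = x" if "x \<in> X" for x
    using inv_into_f_f[of id X x] that by simp
  have "inv_into X id ` C x b = C x b" if "x \<in> X" "b \<in> Q" for x b
  proof -
    have "inv_into X id ` C x b = (\<lambda>y. y) ` C x b"
      using assms(1) that by (intro image_cong) (auto intro: inv_id)
    then show ?thesis by simp
  qed
  then show ?thesis
    using assms(2,3) inv_id unfolding asymorphism_def prec_mapping_def by auto
qed

locale ballean_scale =
  fixes X :: "'a set" and P :: "'p set" and B :: "'a \<Rightarrow> 'p \<Rightarrow> 'a set" and \<delta> :: "nat \<Rightarrow> 'p"
  assumes ballean: "ballean X P B"
    and connected: "connected_ballean X P B"
    and scale_in: "\<delta> n \<in> P"
    and scale_cofinal: "a \<in> P \<Longrightarrow> \<exists>n. radius_le X B a (\<delta> n)"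
    and scale_compose:
      "x \<in> X \<Longrightarrow> ball_of_set (sym_ball X B) (sym_ball X B x (\<delta> n)) (\<delta> n) \<subseteq> B x (\<delta> (Suc n))"
begin

lemma sym_ball_subset_scale_Suc: "x \<in> X \<Longrightarrow> sym_ball X B x (\<delta> n) \<subseteq> B x (\<delta> (Suc n))"
proof
  fix y assume x: "x \<in> X" and y: "y \<in> sym_ball X B x (\<delta> n)"
  then have "y \<in> X"
    using ballean_ball_subset[OF ballean x scale_in] unfolding sym_ball_def dual_ball_def by blast
  then have "y \<in> sym_ball X B y (\<delta> n)"
    using ballean_center_in_ball[OF ballean _ scale_in] unfolding sym_ball_def by blast
  with y scale_compose[OF x] show "y \<in> B x (\<delta> (Suc n))"
    unfolding ball_of_set_def by blast
qed

lemma scale_mono: "m \<le> n \<Longrightarrow> radius_le X B (\<delta> m) (\<delta> n)"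
proof (induction n rule: dec_induct)
  case (step n)
  have "radius_le X B (\<delta> n) (\<delta> (Suc n))"
    using sym_ball_subset_scale_Suc unfolding radius_le_def sym_ball_def by blast
  with step.IH show ?case by (rule radius_le_trans)
qed simp

definition level :: "'a \<Rightarrow> 'a \<Rightarrow> nat" where
  "level x y = (LEAST n. y \<in> sym_ball X B x (\<delta> n))"

definition scale_dist :: "'a \<Rightarrow> 'a \<Rightarrow> real" where
  "scale_dist x y = (if x = y then 0 else real (Suc (level x y)))"

lemma mem_sym_ball_level:
  assumes "x \<in> X" "y \<in> X"
  shows "y \<in> sym_ball X B x (\<delta> (level x y))"
proof -
  obtain a where "a \<in> P" "y \<in> B x a"
    using connected assms unfolding connected_ballean_def by blast
  moreover obtain n where "radius_le X B a (\<delta> n)"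
    using scale_cofinal[OF \<open>a \<in> P\<close>] by blast
  ultimately have "y \<in> sym_ball X B x (\<delta> n)"
    using assms(1) unfolding radius_le_def sym_ball_def by blast
  then show ?thesis
    unfolding level_def by (rule LeastI)
qed

lemma level_le: "y \<in> sym_ball X B x (\<delta> n) \<Longrightarrow> level x y \<le> n"
  unfolding level_def by (rule Least_le)

lemma level_commute: "x \<in> X \<Longrightarrow> y \<in> X \<Longrightarrow> level x y = level y x"
  unfolding level_def by (simp only: sym_ball_commute)

lemma level_triangle:
  assumes "x \<in> X" "y \<in> X" "z \<in> X"
  shows "level x z \<le> Suc (max (level x y) (level y z))"
proof -
  let ?m = "max (level x y) (level y z)"
  have "y \<in> sym_ball X B x (\<delta> ?m)"
    using mem_sym_ball_level[OF assms(1,2)] sym_ball_mono[OF scale_mono[OF max.cobounded1] assms(1)] by blast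
  moreover have "z \<in> sym_ball X B y (\<delta> ?m)"
    using mem_sym_ball_level[OF assms(2,3)] sym_ball_mono[OF scale_mono[OF max.cobounded2] assms(2)] by blast
  ultimately have "z \<in> B x (\<delta> (Suc ?m))"
    using scale_compose[OF assms(1)] unfolding ball_of_set_def by blast
  then show ?thesis
    by (intro level_le) (simp add: sym_ball_def)
qed

lemma metric_on_scale_dist: "metric_on X scale_dist"
  unfolding metric_on_def
proof (intro conjI ballI)
  fix x y z assume "x \<in> X" "y \<in> X" "z \<in> X"
  then show "scale_dist x z \<le> scale_dist x y + scale_dist y z"
    using level_triangle[of x y z] by (auto simp: scale_dist_def)
qed (auto simp: scale_dist_def level_commute)

lemma ball_subset_metric_ball:
  assumes "a \<in> P"
  shows "\<exists>r\<in>nonneg_reals. \<forall>x\<in>X. B x a \<subseteq> metric_ball X scale_dist x r"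
proof -
  obtain n where n: "radius_le X B a (\<delta> n)"
    using scale_cofinal[OF assms] by blast
  have "B x a \<subseteq> metric_ball X scale_dist x (real (Suc n))" if "x \<in> X" for x
  proof
    fix y assume "y \<in> B x a"
    with n that have "level x y \<le> n"
      by (intro level_le) (auto simp: radius_le_def sym_ball_def)
    with \<open>y \<in> B x a\<close> show "y \<in> metric_ball X scale_dist x (real (Suc n))"
      using ballean_ball_subset[OF ballean that assms]
      by (auto simp: metric_ball_def scale_dist_def)
  qed
  then show ?thesis
    by (intro bexI[of _ "real (Suc n)"]) auto
qed

lemma metric_ball_subset_ball:
  assumes "0 \<le> r"
  shows "\<exists>a\<in>P. \<forall>x\<in>X. metric_ball X scale_dist x r \<subseteq> B x a"
proof -
  define n where "n = nat \<lceil>r\<rceil>"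
  have "metric_ball X scale_dist x r \<subseteq> sym_ball X B x (\<delta> n)" if "x \<in> X" for x
  proof
    fix y assume y: "y \<in> metric_ball X scale_dist x r"
    show "y \<in> sym_ball X B x (\<delta> n)"
    proof (cases "y = x")
      case True
      then show ?thesis
        using ballean_center_in_ball[OF ballean that scale_in] unfolding sym_ball_def by blast
    next
      case False
      with y have "level x y \<le> n"
        unfolding metric_ball_def scale_dist_def n_def by auto linarith
      then show ?thesis
        using mem_sym_ball_level[OF that] y sym_ball_mono[OF scale_mono] that
        unfolding metric_ball_def by blast
    qed
  qed
  then show ?thesis
    using sym_ball_subset_scale_Suc scale_in by blast
qed

theorem metrizable_by_scale_dist: "metrizable X P B"
proof -
  have "asymorphism X P B X nonneg_reals (metric_ball X scale_dist) id"
    using ball_subset_metric_ball metric_ball_subset_ball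
    by (intro asymorphism_idI) (auto simp: metric_ball_def)
  with metric_on_scale_dist show ?thesis
    unfolding metrizable_on_def by blast
qed

end

definition has_cofinal_sequence :: "'a set \<Rightarrow> 'p set \<Rightarrow> ('a \<Rightarrow> 'p \<Rightarrow> 'a set) \<Rightarrow> bool" where
  "has_cofinal_sequence X P B \<longleftrightarrow>
     (\<exists>s :: nat \<Rightarrow> 'p. (\<forall>k. s k \<in> P) \<and> (\<forall>a\<in>P. \<exists>k. radius_le X B a (s k)))"

lemma metrizable_if_cofinal_sequence:
  assumes ballean: "ballean X P B" and "connected_ballean X P B"
    and "has_cofinal_sequence X P B"
  shows "metrizable X P B"
proof -
  from assms(3) obtain s where s: "\<forall>k::nat. s k \<in> P" and cofinal: "\<forall>a\<in>P. \<exists>k. radius_le X B a (s k)"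
    unfolding has_cofinal_sequence_def by blast
  let ?compose = "\<lambda>d h. \<forall>x\<in>X. ball_of_set (sym_ball X B) (sym_ball X B x d) d \<subseteq> B x h"
  have step: "\<exists>h. (h \<in> P \<and> radius_le X B (s (Suc n)) h) \<and> ?compose d h" if d: "d \<in> P" for d n
  proof -
    obtain g where "g \<in> P" and g: "?compose d g"
      using ballean_sym_ball_compose[OF ballean d] by blast
    obtain h where "h \<in> P" "radius_le X B g h" "radius_le X B (s (Suc n)) h"
      using ballean_upper_bound[OF ballean \<open>g \<in> P\<close> s[rule_format]] by blast
    moreover have "?compose d h"
      using g \<open>radius_le X B g h\<close> unfolding radius_le_def by blast
    ultimately show ?thesis by blast
  qed
  have "\<exists>\<delta>. \<forall>n. (\<delta> n \<in> P \<and> radius_le X B (s n) (\<delta> n)) \<and> ?compose (\<delta> n) (\<delta> (Suc n))"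
  proof (rule dependent_nat_choice[of "\<lambda>n d. d \<in> P \<and> radius_le X B (s n) d" "\<lambda>_. ?compose"])
    show "\<exists>d. d \<in> P \<and> radius_le X B (s 0) d"
      using s by (intro exI[of _ "s 0"]) simp
  next
    fix d n assume "d \<in> P \<and> radius_le X B (s n) d"
    then show "\<exists>h. (h \<in> P \<and> radius_le X B (s (Suc n)) h) \<and> ?compose d h"
      using step by blast
  qed
  then obtain \<delta> where \<delta>: "\<And>n. \<delta> n \<in> P" "\<And>n. radius_le X B (s n) (\<delta> n)"
    "\<And>n x. x \<in> X \<Longrightarrow> ball_of_set (sym_ball X B) (sym_ball X B x (\<delta> n)) (\<delta> n) \<subseteq> B x (\<delta> (Suc n))"
    by blast
  have "\<exists>n. radius_le X B a (\<delta> n)" if "a \<in> P" for a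
    using cofinal that radius_le_trans[OF _ \<delta>(2)] by blast
  with assms(1,2) \<delta>(1,3) interpret ballean_scale X P B \<delta>
    by unfold_locales
  show ?thesis by (rule metrizable_by_scale_dist)
qed

lemma ball_subset_cell_ball:
  assumes "x \<in> X"
  shows "B x a \<subseteq> cell_ball X B x a"
proof
  fix y assume "y \<in> B x a"
  then have "(\<lambda>u v. u \<in> X \<and> v \<in> B u a)\<^sup>*\<^sup>* x y"
    using assms by (intro r_into_rtranclp) simp
  then show "y \<in> cell_ball X B x a"
    unfolding cell_ball_def by simp
qed

lemma cell_ball_subset_Union_balls:
  assumes ballean: "ballean X P B" and "x \<in> X" and "\<And>k. \<beta> k \<in> P"
    and radius: "\<And>k. radius_le X B a (\<beta> k)"
    and compose: "\<And>k. ball_of_set B (B x (\<beta> k)) (\<beta> k) \<subseteq> B x (\<beta> (Suc k))"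
  shows "cell_ball X B x a \<subseteq> (\<Union>k. B x (\<beta> k))"
proof
  fix y assume "y \<in> cell_ball X B x a"
  then have "(\<lambda>u v. u \<in> X \<and> v \<in> B u a)\<^sup>*\<^sup>* x y"
    unfolding cell_ball_def by simp
  then show "y \<in> (\<Union>k. B x (\<beta> k))"
  proof (induction rule: rtranclp_induct)
    case base
    show ?case using ballean_center_in_ball[OF ballean \<open>x \<in> X\<close> assms(3)] by blast
  next
    case (step y z)
    then have "y \<in> X" "z \<in> B y a" by simp_all
    obtain k where "y \<in> B x (\<beta> k)"
      using step.IH by blast
    moreover have "z \<in> B y (\<beta> k)"
      using radius[of k] \<open>y \<in> X\<close> \<open>z \<in> B y a\<close> unfolding radius_le_def by blast
    ultimately have "z \<in> B x (\<beta> (Suc k))"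
      using compose[of k] unfolding ball_of_set_def by blast
    then show ?case by blast
  qed
qed

lemma cell_ball_bounded:
  assumes ballean: "ballean X P B" and "P' \<subseteq> P"
    and cofinal: "\<forall>a\<in>P. \<exists>b\<in>P'. radius_le X B a b"
    and total: "\<And>a b. a \<in> P' \<Longrightarrow> b \<in> P' \<Longrightarrow> radius_le X B a b \<or> radius_le X B b a"
    and "\<not> has_cofinal_sequence X P B" and "a \<in> P"
  shows "\<exists>b\<in>P. \<forall>x\<in>X. cell_ball X B x a \<subseteq> B x b"
proof -
  let ?compose = "\<lambda>c h. \<forall>x\<in>X. ball_of_set B (B x c) c \<subseteq> B x h"
  have step: "\<exists>h. (h \<in> P' \<and> radius_le X B a h) \<and> ?compose c h" if c: "c \<in> P'" for c
  proof -
    obtain g where "g \<in> P" and g: "?compose c g"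
      using ballean_compose[OF ballean] c \<open>P' \<subseteq> P\<close> by blast
    obtain h where "h \<in> P" "radius_le X B g h" "radius_le X B a h"
      using ballean_upper_bound[OF ballean \<open>g \<in> P\<close> \<open>a \<in> P\<close>] by blast
    obtain h' where "h' \<in> P'" "radius_le X B h h'"
      using cofinal \<open>h \<in> P\<close> by blast
    have "radius_le X B a h'"
      using \<open>radius_le X B a h\<close> \<open>radius_le X B h h'\<close> by (rule radius_le_trans)
    moreover have "?compose c h'"
      using g radius_le_trans[OF \<open>radius_le X B g h\<close> \<open>radius_le X B h h'\<close>]
      unfolding radius_le_def by blast
    ultimately show ?thesis
      using \<open>h' \<in> P'\<close> by blast
  qed
  have "\<exists>\<beta>. \<forall>n. (\<beta> n \<in> P' \<and> radius_le X B a (\<beta> n)) \<and> ?compose (\<beta> n) (\<beta> (Suc n))"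
  proof (rule dependent_nat_choice[of "\<lambda>_ c. c \<in> P' \<and> radius_le X B a c" "\<lambda>_. ?compose"])
    show "\<exists>c. c \<in> P' \<and> radius_le X B a c"
      using cofinal \<open>a \<in> P\<close> by blast
  next
    fix c assume "c \<in> P' \<and> radius_le X B a c"
    then show "\<exists>h. (h \<in> P' \<and> radius_le X B a h) \<and> ?compose c h"
      using step by blast
  qed
  then obtain \<beta> where \<beta>: "\<And>n. \<beta> n \<in> P'" "\<And>n. radius_le X B a (\<beta> n)"
    "\<And>n x. x \<in> X \<Longrightarrow> ball_of_set B (B x (\<beta> n)) (\<beta> n) \<subseteq> B x (\<beta> (Suc n))"
    by blast
  obtain b where "b \<in> P" and b: "\<And>k. \<not> radius_le X B b (\<beta> k)"
    using assms(5) \<beta>(1) \<open>P' \<subseteq> P\<close> unfolding has_cofinal_sequence_def by blast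
  then obtain b' where "b' \<in> P'" "radius_le X B b b'"
    using cofinal by blast
  \<comment> \<open>No \<open>\<beta> k\<close> lies above \<open>b\<close>, so in the linearly ordered \<open>P'\<close> all of them lie below \<open>b'\<close>.\<close>
  have below: "radius_le X B (\<beta> k) b'" for k
    using total[OF \<beta>(1) \<open>b' \<in> P'\<close>] b[of k] radius_le_trans[OF \<open>radius_le X B b b'\<close>] by blast
  have "cell_ball X B x a \<subseteq> B x b'" if "x \<in> X" for x
  proof -
    have "cell_ball X B x a \<subseteq> (\<Union>k. B x (\<beta> k))"
      using \<beta> \<open>P' \<subseteq> P\<close> that by (intro cell_ball_subset_Union_balls[OF ballean that]) auto
    also have "\<dots> \<subseteq> B x b'"
      using below that unfolding radius_le_def by blast
    finally show ?thesis .
  qed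
  with \<open>b' \<in> P'\<close> \<open>P' \<subseteq> P\<close> show ?thesis by blast
qed

lemma cellular_if_no_cofinal_sequence:
  assumes ballean: "ballean X P B" and "P' \<subseteq> P"
    and "\<forall>a\<in>P. \<exists>b\<in>P'. radius_le X B a b"
    and "\<And>a b. a \<in> P' \<Longrightarrow> b \<in> P' \<Longrightarrow> radius_le X B a b \<or> radius_le X B b a"
    and "\<not> has_cofinal_sequence X P B"
  shows "cellular X P B"
  unfolding cellular_def
proof (rule asymorphism_idI)
  show "\<forall>x\<in>X. \<forall>b\<in>P. B x b \<subseteq> X"
    using ballean_ball_subset[OF ballean] by blast
  show "\<forall>a\<in>P. \<exists>b\<in>P. \<forall>x\<in>X. cell_ball X B x a \<subseteq> B x b"
    using cell_ball_bounded[OF assms] by blast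
  show "\<forall>b\<in>P. \<exists>a\<in>P. \<forall>x\<in>X. B x b \<subseteq> cell_ball X B x a"
  proof
    fix b assume "b \<in> P"
    then show "\<exists>a\<in>P. \<forall>x\<in>X. B x b \<subseteq> cell_ball X B x a"
      by (intro bexI[of _ b] ballI ball_subset_cell_ball)
  qed
qed

lemma well_order_on_radius_le_total:
  assumes "well_order_on P' {(\<alpha>, \<beta>). \<alpha> \<in> P' \<and> \<beta> \<in> P' \<and> radius_le X B \<alpha> \<beta>}"
    and "a \<in> P'" "b \<in> P'"
  shows "radius_le X B a b \<or> radius_le X B b a"
  using assms unfolding well_order_on_def linear_order_on_def total_on_def
  by (cases "a = b") auto

theorem theorem1:
  fixes X :: "'a set" and P :: "'p set" and B :: "'a \<Rightarrow> 'p \<Rightarrow> 'a set"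
  assumes "ballean X P B" and "ordinal_ballean X P B"
  shows "metrizable X P B \<or> cellular X P B"
proof -
  have connected: "connected_ballean X P B"
    using assms(2) unfolding ordinal_ballean_def by (elim conjE)
  obtain P' where "P' \<subseteq> P" and cofinal: "\<forall>\<alpha>\<in>P. \<exists>\<beta>\<in>P'. radius_le X B \<alpha> \<beta>"
    and wo: "well_order_on P' {(\<alpha>, \<beta>). \<alpha> \<in> P' \<and> \<beta> \<in> P' \<and> radius_le X B \<alpha> \<beta>}"
    using assms(2) unfolding ordinal_ballean_def by (elim conjE exE) blast
  show ?thesis
  proof (cases "has_cofinal_sequence X P B")
    case True
    then have "metrizable X P B"
      by (rule metrizable_if_cofinal_sequence[OF assms(1) connected])
    then show ?thesis ..
  next
    case False
    have "cellular X P B"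
      using assms(1) \<open>P' \<subseteq> P\<close> cofinal well_order_on_radius_le_total[OF wo] False
      by (rule cellular_if_no_cofinal_sequence)
    then show ?thesis ..
  qed
qed

end
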